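(* Let $n>20$ be an integer. Then $A(n,2)=B(n,2)$.
   Context: $\mathrm{DGP}(n,k)$ ($1\le k<n/2$) is the graph with vertex set $\{(u_i,j),(v_i,j): 0\le i\le n-1,\ j\in\{0,1\}\}$ and edges $\{(u_i,j),(u_{i+1},1-j)\}$, $\{(u_i,j),(v_i,1-j)\}$ (spokes, forming the set $\mathcal{S}$), $\{(v_i,j),(v_{i+k},1-j)\}$, subscripts mod $n$ (the canonical double cover of the generalized Petersen graph $\mathrm{GP}(n,k)$). $A(n,k)=\mathrm{Aut}(\mathrm{DGP}(n,k))$ and $B(n,k)$ is the setwise stabilizer of $\mathcal{S}$ in $A(n,k)$. *)

theory Defs
  imports "HOL-Library.FuncSet"
begin

text \<open>Vertices of DGP(n,k): (s, i, j) with s = Outer for u_i, s = Inner for v_i,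
  0 \<le> i < n, j \<in> {0,1}.\<close>

datatype side = Outer | Inner

type_synonym dvertex = "side \<times> nat \<times> nat"

definition dgp_verts :: "nat \<Rightarrow> dvertex set" where
  "dgp_verts n = {(s, i, j). i < n \<and> j < 2}"

definition dgp_outer_edges :: "nat \<Rightarrow> dvertex set set" where
  "dgp_outer_edges n =
     {{(Outer, i, j), (Outer, (i + 1) mod n, 1 - j)} | i j. i < n \<and> j < 2}"

definition dgp_spokes :: "nat \<Rightarrow> dvertex set set" where
  "dgp_spokes n =
     {{(Outer, i, j), (Inner, i, 1 - j)} | i j. i < n \<and> j < 2}"

definition dgp_inner_edges :: "nat \<Rightarrow> nat \<Rightarrow> dvertex set set" where
  "dgp_inner_edges n k =
     {{(Inner, i, j), (Inner, (i + k) mod n, 1 - j)} | i j. i < n \<and> j < 2}"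

definition dgp_edges :: "nat \<Rightarrow> nat \<Rightarrow> dvertex set set" where
  "dgp_edges n k = dgp_outer_edges n \<union> dgp_spokes n \<union> dgp_inner_edges n k"

text \<open>A(n,k): automorphisms of DGP(n,k), as extensional bijections of the vertex set
  preserving adjacency in both directions.\<close>
definition dgp_aut :: "nat \<Rightarrow> nat \<Rightarrow> (dvertex \<Rightarrow> dvertex) set" where
  "dgp_aut n k = {f \<in> dgp_verts n \<rightarrow>\<^sub>E dgp_verts n.
      bij_betw f (dgp_verts n) (dgp_verts n) \<and>
      (\<forall>x \<in> dgp_verts n. \<forall>y \<in> dgp_verts n.
          {x, y} \<in> dgp_edges n k \<longleftrightarrow> {f x, f y} \<in> dgp_edges n k)}"

text \<open>B(n,k): setwise stabiliser of the spokes in A(n,k).\<close>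
definition dgp_spoke_stab :: "nat \<Rightarrow> nat \<Rightarrow> (dvertex \<Rightarrow> dvertex) set" where
  "dgp_spoke_stab n k = {f \<in> dgp_aut n k. (\<lambda>e. f ` e) ` dgp_spokes n = dgp_spokes n}"

end

theory Submission
  imports Defs
begin

text \<open>
  An automorphism of a graph maps 3-arcs to 3-arcs and 8-cycles to 8-cycles, so it preserves
  the set of vertices that are the second vertex of some 3-arc lying on no 8-cycle. In
  DGP(n,2) with n large these are exactly the inner vertices v_i: the 3-arc
  v_(i-2) v_i v_(i+2) v_(i+4) runs along an inner cycle and lies on no 8-cycle, while every
  3-arc through an outer vertex does. Hence every automorphism preserves the two sides, and
  therefore the spokes, which are exactly the edges joining the two sides.
\<close>

definition closes_to_8_cycle ::
    "('a \<Rightarrow> 'a \<Rightarrow> bool) \<Rightarrow> 'a \<Rightarrow> 'a \<Rightarrow> 'a \<Rightarrow> 'a \<Rightarrow> bool" where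
  "closes_to_8_cycle E x0 x y w \<longleftrightarrow> (\<exists>a1 a2 a3 a4.
     E w a1 \<and> E a1 a2 \<and> E a2 a3 \<and> E a3 a4 \<and> E a4 x0 \<and> distinct [x0, x, y, w, a1, a2, a3, a4])"

definition has_3arc_off_8_cycles :: "('a \<Rightarrow> 'a \<Rightarrow> bool) \<Rightarrow> 'a \<Rightarrow> bool" where
  "has_3arc_off_8_cycles E x \<longleftrightarrow> (\<exists>x0 y w.
     E x x0 \<and> E x y \<and> E y w \<and> x0 \<noteq> y \<and> w \<noteq> x \<and> \<not> closes_to_8_cycle E x0 x y w)"

definition graph_automorphism :: "'a set \<Rightarrow> ('a \<Rightarrow> 'a \<Rightarrow> bool) \<Rightarrow> ('a \<Rightarrow> 'a) \<Rightarrow> bool" where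
  "graph_automorphism V E g \<longleftrightarrow>
     bij_betw g V V \<and> (\<forall>x \<in> V. \<forall>y \<in> V. E x y \<longleftrightarrow> E (g x) (g y))"

lemma graph_automorphism_inv_into:
  assumes "graph_automorphism V E g"
  shows "graph_automorphism V E (inv_into V g)"
proof -
  have bij: "bij_betw g V V"
    using assms unfolding graph_automorphism_def by blast
  then have "inv_into V g x \<in> V" "g (inv_into V g x) = x" if "x \<in> V" for x
    using that by (auto simp: bij_betw_def inv_into_into f_inv_into_f)
  then show ?thesis
    using assms bij_betw_inv_into[OF bij] unfolding graph_automorphism_def by metis
qed

lemma closes_to_8_cycle_automorphism:
  assumes g: "graph_automorphism V E g"
    and edges: "\<And>u v. E u v \<Longrightarrow> u \<in> V \<and> v \<in> V"
    and "x \<in> V" "y \<in> V" "closes_to_8_cycle E x0 x y w"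
  shows "closes_to_8_cycle E (g x0) (g x) (g y) (g w)"
proof -
  obtain a1 a2 a3 a4 where path: "E w a1" "E a1 a2" "E a2 a3" "E a3 a4" "E a4 x0"
    and dist: "distinct [x0, x, y, w, a1, a2, a3, a4]"
    using assms(5) unfolding closes_to_8_cycle_def by blast
  have "set [x0, x, y, w, a1, a2, a3, a4] \<subseteq> V"
    using path edges \<open>x \<in> V\<close> \<open>y \<in> V\<close> by auto
  then have "distinct (map g [x0, x, y, w, a1, a2, a3, a4])"
    using dist g unfolding graph_automorphism_def bij_betw_def
    by (simp only: distinct_map) (blast intro: inj_on_subset)
  moreover have "E (g w) (g a1)" "E (g a1) (g a2)" "E (g a2) (g a3)" "E (g a3) (g a4)" "E (g a4) (g x0)"
    using path edges g unfolding graph_automorphism_def by blast+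
  ultimately show ?thesis
    unfolding closes_to_8_cycle_def by auto
qed

lemma has_3arc_off_8_cycles_automorphism:
  assumes g: "graph_automorphism V E g"
    and edges: "\<And>u v. E u v \<Longrightarrow> u \<in> V \<and> v \<in> V"
    and x: "x \<in> V" and "has_3arc_off_8_cycles E x"
  shows "has_3arc_off_8_cycles E (g x)"
proof -
  obtain x0 y w where arc: "E x x0" "E x y" "E y w" "x0 \<noteq> y" "w \<noteq> x"
    and off: "\<not> closes_to_8_cycle E x0 x y w"
    using assms(4) unfolding has_3arc_off_8_cycles_def by blast
  have V: "x0 \<in> V" "y \<in> V" "w \<in> V"
    using arc edges by blast+
  define h where "h = inv_into V g"
  have h: "graph_automorphism V E h"
    unfolding h_def using g by (rule graph_automorphism_inv_into)
  have hg: "h (g v) = v" if "v \<in> V" for v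
    using g that unfolding h_def graph_automorphism_def bij_betw_def by simp
  have gV: "g v \<in> V" if "v \<in> V" for v
    using g that unfolding graph_automorphism_def bij_betw_def by blast
  have "\<not> closes_to_8_cycle E (g x0) (g x) (g y) (g w)"
    using closes_to_8_cycle_automorphism[OF h edges gV[OF x] gV[OF \<open>y \<in> V\<close>]] off hg V x by force
  moreover have "E (g x) (g x0)" "E (g x) (g y)" "E (g y) (g w)" "g x0 \<noteq> g y" "g w \<noteq> g x"
    using arc V x g unfolding graph_automorphism_def bij_betw_def by (blast dest: inj_onD)+
  ultimately show ?thesis
    unfolding has_3arc_off_8_cycles_def by blast
qed

lemma has_3arc_off_8_cycles_automorphism_iff:
  assumes g: "graph_automorphism V E g"
    and edges: "\<And>u v. E u v \<Longrightarrow> u \<in> V \<and> v \<in> V"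
    and x: "x \<in> V"
  shows "has_3arc_off_8_cycles E (g x) \<longleftrightarrow> has_3arc_off_8_cycles E x"
proof
  have "inv_into V g (g x) = x" "g x \<in> V"
    using g x unfolding graph_automorphism_def bij_betw_def by auto
  then show "has_3arc_off_8_cycles E (g x) \<Longrightarrow> has_3arc_off_8_cycles E x"
    using has_3arc_off_8_cycles_automorphism[OF graph_automorphism_inv_into[OF g] edges] by metis
qed (rule has_3arc_off_8_cycles_automorphism[OF g edges x])

lemma graph_automorphism_image_cross_edges:
  assumes g: "graph_automorphism V E g"
    and edges: "\<And>u v. E u v \<Longrightarrow> u \<in> V \<and> v \<in> V"
    and colour: "\<And>v. v \<in> V \<Longrightarrow> c (g v) = c v"
  shows "(\<lambda>e. g ` e) ` {{x, y} | x y. E x y \<and> c x \<noteq> c y} = {{x, y} | x y. E x y \<and> c x \<noteq> c y}"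
    (is "?image = ?cross")
proof
  have forward: "h ` e \<in> ?cross"
    if h: "graph_automorphism V E h" and hc: "\<And>v. v \<in> V \<Longrightarrow> c (h v) = c v" and "e \<in> ?cross" for h e
  proof -
    obtain x y where e: "e = {x, y}" and xy: "E x y" "c x \<noteq> c y"
      using \<open>e \<in> ?cross\<close> by blast
    have "x \<in> V" "y \<in> V"
      using edges xy(1) by blast+
    then have "E (h x) (h y)" "c (h x) \<noteq> c (h y)"
      using h hc xy unfolding graph_automorphism_def by auto
    then show ?thesis
      unfolding e by blast
  qed
  show "?image \<subseteq> ?cross"
    using forward[OF g colour] by blast
  define h where "h = inv_into V g"
  have gh: "g (h v) = v" "h v \<in> V" if "v \<in> V" for v
    using g that unfolding h_def graph_automorphism_def bij_betw_def
    by (auto simp: f_inv_into_f inv_into_into)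
  have h: "graph_automorphism V E h"
    unfolding h_def using g by (rule graph_automorphism_inv_into)
  have hc: "c (h v) = c v" if "v \<in> V" for v
    using colour gh that by metis
  show "?cross \<subseteq> ?image"
  proof
    fix e assume "e \<in> ?cross"
    then have "e \<subseteq> V"
      using edges by blast
    then have "e = g ` h ` e"
      using gh by (force simp: image_image)
    then show "e \<in> ?image"
      using forward[OF h hc \<open>e \<in> ?cross\<close>] by blast
  qed
qed

definition shift :: "nat \<Rightarrow> nat \<Rightarrow> int \<Rightarrow> nat" where
  "shift n a d = nat ((int a + d) mod int n)"

lemma int_shift: "0 < n \<Longrightarrow> int (shift n a d) = (int a + d) mod int n"
  unfolding shift_def by simp

lemma shift_less: "0 < n \<Longrightarrow> shift n a d < n"
  unfolding shift_def by (simp add: nat_less_iff)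

lemma shift_0: "a < n \<Longrightarrow> shift n a 0 = a"
  unfolding shift_def by simp

lemma eq_shift_iff: "i < n \<Longrightarrow> i = shift n a d \<longleftrightarrow> int i = (int a + d) mod int n"
  by (metis int_shift gr_implies_not0 neq0_conv of_nat_eq_iff)

lemma shift_add_mod: "0 < n \<Longrightarrow> (shift n a d + k) mod n = shift n a (d + int k)"
  by (simp add: eq_shift_iff zmod_int int_shift mod_add_left_eq add.assoc)

lemma add_mod_eq_shift_iff:
  "i < n \<Longrightarrow> (i + k) mod n = shift n a d \<longleftrightarrow> i = shift n a (d - int k)"
proof -
  assume i: "i < n"
  have "(i + k) mod n = shift n a d \<longleftrightarrow> (int i + int k) mod int n = (int a + d) mod int n"
    using i by (simp add: eq_shift_iff zmod_int)
  also have "\<dots> \<longleftrightarrow> int i mod int n = (int a + (d - int k)) mod int n"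
    by (simp add: mod_eq_dvd_iff algebra_simps)
  also have "\<dots> \<longleftrightarrow> i = shift n a (d - int k)"
    using i by (simp add: eq_shift_iff)
  finally show ?thesis .
qed

lemma shift_eq_iff:
  assumes "\<bar>d - e\<bar> < int n"
  shows "shift n a d = shift n a e \<longleftrightarrow> d = e"
proof
  assume "shift n a d = shift n a e"
  then have "(int a + d) mod int n = (int a + e) mod int n"
    using assms by (metis int_shift abs_ge_zero le_less_trans of_nat_0_less_iff)
  then have "int n dvd d - e"
    by (simp add: mod_eq_dvd_iff)
  then show "d = e"
    using assms dvd_imp_le_int[of "d - e" "int n"] by fastforce
qed simp

definition dgp_adj :: "nat \<Rightarrow> nat \<Rightarrow> dvertex \<Rightarrow> dvertex \<Rightarrow> bool" where
  "dgp_adj n k x y \<longleftrightarrow> {x, y} \<in> dgp_edges n k"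

lemma doubleton_in_circulant_edges_iff:
  fixes j :: nat
  assumes "0 < n" "j < 2"
  shows "{(s, shift n a d, j), y} \<in> {{(s, i, j), (s, (i + k) mod n, 1 - j)} | i j. i < n \<and> j < 2}
    \<longleftrightarrow> y = (s, shift n a (d + int k), 1 - j) \<or> y = (s, shift n a (d - int k), 1 - j)"
proof
  assume "{(s, shift n a d, j), y} \<in> {{(s, i, j), (s, (i + k) mod n, 1 - j)} | i j. i < n \<and> j < 2}"
  then obtain i j' where i: "i < n" and "j' < 2" and
    "{(s, shift n a d, j), y} = {(s, i, j'), (s, (i + k) mod n, 1 - j')}"
    by blast
  then consider "shift n a d = i" "j = j'" "y = (s, (i + k) mod n, 1 - j')"
    | "(i + k) mod n = shift n a d" "j' = 1 - j" "y = (s, i, j')"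
    by (fastforce simp: doubleton_eq_iff)
  then show "y = (s, shift n a (d + int k), 1 - j) \<or> y = (s, shift n a (d - int k), 1 - j)"
  proof cases
    case 1
    then show ?thesis
      using shift_add_mod[OF assms(1)] by metis
  next
    case 2
    then show ?thesis
      using add_mod_eq_shift_iff[OF i] by metis
  qed
next
  assume "y = (s, shift n a (d + int k), 1 - j) \<or> y = (s, shift n a (d - int k), 1 - j)"
  then show "{(s, shift n a d, j), y} \<in> {{(s, i, j), (s, (i + k) mod n, 1 - j)} | i j. i < n \<and> j < 2}"
  proof
    assume "y = (s, shift n a (d + int k), 1 - j)"
    then have "{(s, shift n a d, j), y} = {(s, shift n a d, j), (s, (shift n a d + k) mod n, 1 - j)}"
      using shift_add_mod[OF assms(1)] by simp
    then show ?thesis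
      using assms shift_less by blast
  next
    assume "y = (s, shift n a (d - int k), 1 - j)"
    then have "{(s, shift n a d, j), y} =
      {(s, shift n a (d - int k), 1 - j), (s, (shift n a (d - int k) + k) mod n, 1 - (1 - j))}"
      using assms by (simp add: shift_add_mod insert_commute)
    moreover have "1 - j < 2"
      by simp
    ultimately show ?thesis
      using assms shift_less by blast
  qed
qed

text \<open>
  The neighbour lemmas are stated for an explicit pair, so that simp only rewrites adjacencies
  between two known vertices; a vertex that is still bound by a quantifier is instead eliminated
  by the \<open>ex_dgp_adj\<close> lemmas, which enumerate its three neighbours.
\<close>

lemma dgp_adj_Outer:
  fixes j :: nat
  assumes "0 < n" "j < 2"
  shows "dgp_adj n k (Outer, shift n a d, j) (s', i', j') \<longleftrightarrow>
    (s', i', j') = (Outer, shift n a (d + 1), 1 - j) \<or>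
    (s', i', j') = (Outer, shift n a (d - 1), 1 - j) \<or>
    (s', i', j') = (Inner, shift n a d, 1 - j)"
    (is "dgp_adj n k ?x ?y \<longleftrightarrow> _")
proof -
  have "{?x, ?y} \<in> dgp_outer_edges n \<longleftrightarrow>
      ?y = (Outer, shift n a (d + 1), 1 - j) \<or> ?y = (Outer, shift n a (d - 1), 1 - j)"
    using doubleton_in_circulant_edges_iff[OF assms, of Outer a d ?y 1]
    unfolding dgp_outer_edges_def by simp
  moreover have "{?x, ?y} \<in> dgp_spokes n \<longleftrightarrow> ?y = (Inner, shift n a d, 1 - j)"
    using assms shift_less unfolding dgp_spokes_def by (fastforce simp: doubleton_eq_iff)
  moreover have "{?x, ?y} \<notin> dgp_inner_edges n k"
    unfolding dgp_inner_edges_def by (auto simp: doubleton_eq_iff)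
  ultimately show ?thesis
    unfolding dgp_adj_def dgp_edges_def by blast
qed

lemma dgp_adj_Inner:
  fixes j :: nat
  assumes "0 < n" "j < 2"
  shows "dgp_adj n k (Inner, shift n a d, j) (s', i', j') \<longleftrightarrow>
    (s', i', j') = (Inner, shift n a (d + int k), 1 - j) \<or>
    (s', i', j') = (Inner, shift n a (d - int k), 1 - j) \<or>
    (s', i', j') = (Outer, shift n a d, 1 - j)"
    (is "dgp_adj n k ?x ?y \<longleftrightarrow> _")
proof -
  have "{?x, ?y} \<in> dgp_inner_edges n k \<longleftrightarrow>
      ?y = (Inner, shift n a (d + int k), 1 - j) \<or> ?y = (Inner, shift n a (d - int k), 1 - j)"
    using doubleton_in_circulant_edges_iff[OF assms, of Inner a d ?y k]
    unfolding dgp_inner_edges_def by simp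
  moreover have "{?x, ?y} \<in> dgp_spokes n \<longleftrightarrow> ?y = (Outer, shift n a d, 1 - j)"
    using assms shift_less unfolding dgp_spokes_def by (fastforce simp: doubleton_eq_iff)
  moreover have "{?x, ?y} \<notin> dgp_outer_edges n"
    unfolding dgp_outer_edges_def by (auto simp: doubleton_eq_iff)
  ultimately show ?thesis
    unfolding dgp_adj_def dgp_edges_def by blast
qed

lemma ex_dgp_adj_Outer:
  fixes j :: nat
  assumes "0 < n" "j < 2"
  shows "(\<exists>y. dgp_adj n k (Outer, shift n a d, j) y \<and> P y) \<longleftrightarrow>
    P (Outer, shift n a (d + 1), 1 - j) \<or> P (Outer, shift n a (d - 1), 1 - j) \<or>
    P (Inner, shift n a d, 1 - j)"
  using assms by (auto simp: dgp_adj_Outer)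

lemma ex_dgp_adj_Inner:
  fixes j :: nat
  assumes "0 < n" "j < 2"
  shows "(\<exists>y. dgp_adj n k (Inner, shift n a d, j) y \<and> P y) \<longleftrightarrow>
    P (Inner, shift n a (d + int k), 1 - j) \<or> P (Inner, shift n a (d - int k), 1 - j) \<or>
    P (Outer, shift n a d, 1 - j)"
  using assms by (auto simp: dgp_adj_Inner)

lemma dgp_adj_sym: "dgp_adj n k x y \<longleftrightarrow> dgp_adj n k y x"
  unfolding dgp_adj_def by (simp add: insert_commute)

lemma ex_dgp_adj_Outer':
  fixes j :: nat
  assumes "0 < n" "j < 2"
  shows "(\<exists>y. dgp_adj n k y (Outer, shift n a d, j) \<and> P y) \<longleftrightarrow>
    P (Outer, shift n a (d + 1), 1 - j) \<or> P (Outer, shift n a (d - 1), 1 - j) \<or>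
    P (Inner, shift n a d, 1 - j)"
  using ex_dgp_adj_Outer[OF assms] by (simp add: dgp_adj_sym[of n k _ "(Outer, shift n a d, j)"])

lemma ex_dgp_adj_Inner':
  fixes j :: nat
  assumes "0 < n" "j < 2"
  shows "(\<exists>y. dgp_adj n k y (Inner, shift n a d, j) \<and> P y) \<longleftrightarrow>
    P (Inner, shift n a (d + int k), 1 - j) \<or> P (Inner, shift n a (d - int k), 1 - j) \<or>
    P (Outer, shift n a d, 1 - j)"
  using ex_dgp_adj_Inner[OF assms] by (simp add: dgp_adj_sym[of n k _ "(Inner, shift n a d, j)"])

lemma has_3arc_off_8_cycles_dgp_iff:
  assumes "20 < n" "x \<in> dgp_verts n"
  shows "has_3arc_off_8_cycles (dgp_adj n 2) x \<longleftrightarrow> fst x = Inner"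
proof -
  obtain s a j where "x = (s, a, j)" and a: "a < n" and j: "j < 2"
    using assms(2) unfolding dgp_verts_def by blast
  then have x: "x = (s, shift n a 0, j)"
    by (simp add: shift_0)
  have n: "0 < n"
    using assms(1) by simp
  have shift_eq: "shift n a d = shift n a e \<longleftrightarrow> d = e" if "\<bar>d - e\<bar> \<le> 20" for d e
    using that assms(1) by (intro shift_eq_iff) linarith
  txt \<open>
    All vertices met have index offsets from \<open>a\<close> of absolute
    value at most 12 and any two that are compared differ by at most 20, so \<open>shift_eq\<close>
    decides every vertex equality; this is where \<open>20 < n\<close> is used.
  \<close>
  note neighbours = dgp_adj_Outer[OF n] dgp_adj_Inner[OF n]
    ex_dgp_adj_Outer[OF n] ex_dgp_adj_Inner[OF n] ex_dgp_adj_Outer'[OF n] ex_dgp_adj_Inner'[OF n]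
  have "has_3arc_off_8_cycles (dgp_adj n 2) (Inner, shift n a 0, j)"
    unfolding has_3arc_off_8_cycles_def closes_to_8_cycle_def
    using j shift_eq
    by (intro exI[of _ "(Inner, shift n a (-2), 1 - j)"] exI[of _ "(Inner, shift n a 2, 1 - j)"]
        exI[of _ "(Inner, shift n a 4, j)"])
      (simp del: split_paired_Ex split_paired_All add: neighbours)
  moreover have "\<not> has_3arc_off_8_cycles (dgp_adj n 2) (Outer, shift n a 0, j)"
    unfolding has_3arc_off_8_cycles_def closes_to_8_cycle_def
    using j shift_eq by (simp del: split_paired_Ex split_paired_All add: neighbours)
  ultimately show ?thesis
    unfolding x by (cases s) simp_all
qed

lemma dgp_edges_subset_verts: "e \<in> dgp_edges n k \<Longrightarrow> e \<subseteq> dgp_verts n"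
  unfolding dgp_edges_def dgp_outer_edges_def dgp_spokes_def dgp_inner_edges_def dgp_verts_def
  by auto

lemma dgp_adj_in_verts: "dgp_adj n k x y \<Longrightarrow> x \<in> dgp_verts n \<and> y \<in> dgp_verts n"
  using dgp_edges_subset_verts unfolding dgp_adj_def by blast

lemma dgp_aut_graph_automorphism:
  "f \<in> dgp_aut n k \<Longrightarrow> graph_automorphism (dgp_verts n) (dgp_adj n k) f"
  unfolding dgp_aut_def graph_automorphism_def dgp_adj_def by blast

lemma dgp_spokes_eq_cross_edges:
  "dgp_spokes n = {{x, y} | x y. dgp_adj n k x y \<and> fst x \<noteq> fst y}"
proof
  show "dgp_spokes n \<subseteq> {{x, y} | x y. dgp_adj n k x y \<and> fst x \<noteq> fst y}"
  proof
    fix e assume e: "e \<in> dgp_spokes n"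
    then obtain i j where ij: "e = {(Outer, i, j), (Inner, i, 1 - j)}"
      unfolding dgp_spokes_def by blast
    then have "dgp_adj n k (Outer, i, j) (Inner, i, 1 - j)"
      using e unfolding dgp_adj_def dgp_edges_def by simp
    then show "e \<in> {{x, y} | x y. dgp_adj n k x y \<and> fst x \<noteq> fst y}"
      unfolding ij by force
  qed
  show "{{x, y} | x y. dgp_adj n k x y \<and> fst x \<noteq> fst y} \<subseteq> dgp_spokes n"
  proof
    fix e assume "e \<in> {{x, y} | x y. dgp_adj n k x y \<and> fst x \<noteq> fst y}"
    then obtain x y where e: "e = {x, y}" and "{x, y} \<in> dgp_edges n k" and "fst x \<noteq> fst y"
      unfolding dgp_adj_def by blast
    moreover have "{x, y} \<notin> dgp_outer_edges n" "{x, y} \<notin> dgp_inner_edges n k"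
      using \<open>fst x \<noteq> fst y\<close> unfolding dgp_outer_edges_def dgp_inner_edges_def
      by (auto simp: doubleton_eq_iff)
    ultimately show "e \<in> dgp_spokes n"
      unfolding dgp_edges_def by blast
  qed
qed

lemma dgp_aut_preserves_side:
  assumes "20 < n" "f \<in> dgp_aut n 2" "x \<in> dgp_verts n"
  shows "fst (f x) = fst x"
proof -
  have aut: "graph_automorphism (dgp_verts n) (dgp_adj n 2) f"
    using assms(2) by (rule dgp_aut_graph_automorphism)
  then have "f x \<in> dgp_verts n"
    using assms(3) unfolding graph_automorphism_def bij_betw_def by blast
  then have "fst (f x) = Inner \<longleftrightarrow> fst x = Inner"
    using has_3arc_off_8_cycles_automorphism_iff[OF aut dgp_adj_in_verts assms(3)]
      has_3arc_off_8_cycles_dgp_iff[OF assms(1)] assms(3) by simp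
  then show ?thesis
    by (cases "fst x"; cases "fst (f x)") simp_all
qed

theorem lemma5p9:
  fixes n :: nat
  assumes "n > 20"
  shows "dgp_aut n 2 = dgp_spoke_stab n 2"
proof
  show "dgp_spoke_stab n 2 \<subseteq> dgp_aut n 2"
    unfolding dgp_spoke_stab_def by blast
  show "dgp_aut n 2 \<subseteq> dgp_spoke_stab n 2"
  proof
    fix f assume f: "f \<in> dgp_aut n 2"
    have "(\<lambda>e. f ` e) ` {{x, y} | x y. dgp_adj n 2 x y \<and> fst x \<noteq> fst y} =
        {{x, y} | x y. dgp_adj n 2 x y \<and> fst x \<noteq> fst y}"
      by (rule graph_automorphism_image_cross_edges[where c = fst, OF dgp_aut_graph_automorphism[OF f]
            dgp_adj_in_verts dgp_aut_preserves_side[OF assms f]])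
    then have "(\<lambda>e. f ` e) ` dgp_spokes n = dgp_spokes n"
      by (simp only: dgp_spokes_eq_cross_edges[of n 2])
    then show "f \<in> dgp_spoke_stab n 2"
      using f unfolding dgp_spoke_stab_def by blast
  qed
qed

end
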